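(* Let $t$ be a positive integer and let $G$ be a graph on $4t-1$ vertices with $\alpha(G)=2$ and $\mathrm{cm}(G)\le t-1$. Let $S_0,S_1,S_2$ be pairwise disjoint subsets of $V(G)$ (some possibly empty), each inducing a clique in $G$, such that $S_0$ is complete to $S_1\cup S_2$ and $S_1$ is anti-complete to $S_2$. Then $|S_0|+|S_1|+|S_2|\le t-1$.
   Context: All graphs are finite and simple. $\alpha(G)$ is the independence number. A matching $M$ in $G$ is connected if for every two edges of $M$ there is an edge of $G$ joining an endpoint of one to an endpoint of the other; $\mathrm{cm}(G)$ is the maximum size of a connected matching in $G$. For disjoint vertex sets $A,B$: $A$ is complete to $B$ if every vertex of $A$ is adjacent to every vertex of $B$; $A$ is anti-complete to $B$ if there is no edge between them. *)

theory Defs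
  imports Main
begin

definition simple_graph :: "'a set \<Rightarrow> ('a \<Rightarrow> 'a \<Rightarrow> bool) \<Rightarrow> bool" where
  "simple_graph V E \<longleftrightarrow> finite V \<and> (\<forall>u v. E u v \<longrightarrow> E v u)
     \<and> (\<forall>v. \<not> E v v) \<and> (\<forall>u v. E u v \<longrightarrow> u \<in> V \<and> v \<in> V)"

definition independent_set :: "'a set \<Rightarrow> ('a \<Rightarrow> 'a \<Rightarrow> bool) \<Rightarrow> 'a set \<Rightarrow> bool" where
  "independent_set V E I \<longleftrightarrow> I \<subseteq> V \<and> (\<forall>u\<in>I. \<forall>v\<in>I. \<not> E u v)"

definition independence_number :: "'a set \<Rightarrow> ('a \<Rightarrow> 'a \<Rightarrow> bool) \<Rightarrow> nat" where
  "independence_number V E = Max (card ` {I. independent_set V E I})"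

definition clique :: "'a set \<Rightarrow> ('a \<Rightarrow> 'a \<Rightarrow> bool) \<Rightarrow> 'a set \<Rightarrow> bool" where
  "clique V E S \<longleftrightarrow> S \<subseteq> V \<and> (\<forall>u\<in>S. \<forall>v\<in>S. u \<noteq> v \<longrightarrow> E u v)"

definition is_edge :: "('a \<Rightarrow> 'a \<Rightarrow> bool) \<Rightarrow> 'a set \<Rightarrow> bool" where
  "is_edge E e \<longleftrightarrow> (\<exists>u v. e = {u, v} \<and> E u v)"

definition matching :: "('a \<Rightarrow> 'a \<Rightarrow> bool) \<Rightarrow> 'a set set \<Rightarrow> bool" where
  "matching E M \<longleftrightarrow> (\<forall>e\<in>M. is_edge E e) \<and> (\<forall>e\<in>M. \<forall>f\<in>M. e \<noteq> f \<longrightarrow> e \<inter> f = {})"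

definition connected_matching :: "('a \<Rightarrow> 'a \<Rightarrow> bool) \<Rightarrow> 'a set set \<Rightarrow> bool" where
  "connected_matching E M \<longleftrightarrow> matching E M \<and>
     (\<forall>e\<in>M. \<forall>f\<in>M. e \<noteq> f \<longrightarrow> (\<exists>u\<in>e. \<exists>v\<in>f. E u v))"

definition cm :: "'a set \<Rightarrow> ('a \<Rightarrow> 'a \<Rightarrow> bool) \<Rightarrow> nat" where
  "cm V E = Max (card ` {M. connected_matching E M})"

definition complete_to :: "('a \<Rightarrow> 'a \<Rightarrow> bool) \<Rightarrow> 'a set \<Rightarrow> 'a set \<Rightarrow> bool" where
  "complete_to E A B \<longleftrightarrow> (\<forall>a\<in>A. \<forall>b\<in>B. E a b)"

definition anticomplete_to :: "('a \<Rightarrow> 'a \<Rightarrow> bool) \<Rightarrow> 'a set \<Rightarrow> 'a set \<Rightarrow> bool" where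
  "anticomplete_to E A B \<longleftrightarrow> (\<forall>a\<in>A. \<forall>b\<in>B. \<not> E a b)"

end

theory Submission
  imports Defs
begin

text \<open>Since \<open>\<alpha>(G) \<le> 2\<close>, the non-neighbourhood of every vertex is a clique. A clique \<open>P\<close> with
  \<open>t \<le> |P| \<le> 2t\<close> whose vertices each have \<open>2t - |P|\<close> neighbours outside \<open>P\<close> carries a connected
  matching of size \<open>t\<close>: pair \<open>2(|P| - t)\<close> of its vertices among themselves and match \<open>2t - |P|\<close>
  others greedily to outside neighbours. As \<open>cm(G) < t\<close>, it follows that every clique has fewer than
  \<open>2t\<close>, and then fewer than \<open>t\<close>, vertices; so every vertex has fewer than \<open>t\<close> non-neighbours.

  If \<open>|S\<^sub>0| + |S\<^sub>1| + |S\<^sub>2| \<ge> t\<close>, pick a \<open>t\<close>-subset \<open>D = D\<^sub>0 \<union> D\<^sub>1 \<union> D\<^sub>2\<close> of their union. No vertex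
  outside \<open>D\<close> misses both a vertex of \<open>D\<^sub>1\<close> and one of \<open>D\<^sub>2\<close>, as this would give an independent
  triple; counting the \<open>3t - 1\<close> vertices outside \<open>D\<close> then shows that on one side, say \<open>D\<^sub>2\<close>, every
  vertex has \<open>|D\<^sub>2|\<close> neighbours outside \<open>D\<close> that are complete to \<open>D\<^sub>1\<close>. Matching \<open>D\<^sub>2\<close> greedily
  into these and the rest of \<open>D\<close> into further outside neighbours gives a matching of size \<open>t\<close>. It
  is connected: the cliques \<open>D\<^sub>0 \<union> D\<^sub>1\<close> and \<open>D\<^sub>0 \<union> D\<^sub>2\<close> join all pairs of edges except those
  between \<open>D\<^sub>1\<close> and \<open>D\<^sub>2\<close>, which are joined through the partners of \<open>D\<^sub>2\<close>.\<close>

lemma extend_inj_choice: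
  assumes "finite Y" "X \<inter> Y = {}" "inj_on f X"
    and "\<forall>y\<in>Y. card Y \<le> card (C y - f ` X)"
  shows "\<exists>g. inj_on g (X \<union> Y) \<and> (\<forall>x\<in>X. g x = f x) \<and> (\<forall>y\<in>Y. g y \<in> C y)"
  using assms
proof (induction Y rule: finite_induct)
  case empty
  then show ?case by auto
next
  case (insert a Y)
  then obtain g where g: "inj_on g (X \<union> Y)" "\<forall>x\<in>X. g x = f x" "\<forall>y\<in>Y. g y \<in> C y"
    by fastforce
  have "card (g ` Y) < card (C a - f ` X)"
    using card_image_le[OF \<open>finite Y\<close>, of g] insert by fastforce
  then have "\<not> C a - f ` X \<subseteq> g ` Y"
    using card_mono[OF finite_imageI[OF \<open>finite Y\<close>]] by fastforce
  then obtain b where "b \<in> C a - f ` X" "b \<notin> g ` Y"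
    by blast
  then have b: "b \<in> C a" "b \<notin> g ` (X \<union> Y)"
    using g(2) by auto
  then have "inj_on (g(a := b)) (X \<union> insert a Y)"
    using g(1) insert.hyps(2) insert.prems(1) by (auto simp: inj_on_def)
  moreover have "\<forall>x\<in>X. (g(a := b)) x = f x" "\<forall>y\<in>insert a Y. (g(a := b)) y \<in> C y"
    using g(2,3) b(1) insert.hyps(2) insert.prems(1) by auto
  ultimately show ?case
    by blast
qed

corollary obtain_inj_choice:
  assumes "finite Y" "\<forall>y\<in>Y. card Y \<le> card (C y)"
  obtains g where "inj_on g Y" "\<forall>y\<in>Y. g y \<in> C y"
proof -
  have "\<exists>g. inj_on g Y \<and> (\<forall>y\<in>Y. g y \<in> C y)"
    using extend_inj_choice[of Y "{}" _ C] assms by simp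
  then show thesis
    using that by blast
qed

lemma finite_connected_matchings:
  assumes "simple_graph V E"
  shows "finite {M. connected_matching E M}"
proof (rule finite_subset)
  show "{M. connected_matching E M} \<subseteq> Pow (Pow V)"
    using assms by (auto simp: connected_matching_def matching_def is_edge_def simple_graph_def)
  show "finite (Pow (Pow V))"
    using assms by (simp add: simple_graph_def)
qed

lemma card_le_cm:
  assumes "simple_graph V E" "connected_matching E M"
  shows "card M \<le> cm V E"
  unfolding cm_def using assms finite_connected_matchings by (intro Max_ge) auto

lemma partner_map_card_le_cm:
  assumes "simple_graph V E" "inj_on f D" "f ` D \<inter> D = {}"
    and "\<forall>v\<in>D. E v (f v)"
    and "\<forall>v\<in>D. \<forall>w\<in>D. v \<noteq> w \<longrightarrow> (\<exists>x\<in>{v, f v}. \<exists>y\<in>{w, f w}. E x y)"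
  shows "card D \<le> cm V E"
proof -
  let ?M = "(\<lambda>v. {v, f v}) ` D"
  have distinct_edges: "{v, f v} \<inter> {w, f w} = {}" if "v \<in> D" "w \<in> D" "v \<noteq> w" for v w
    using that assms(2,3) by (auto dest: inj_onD)
  have "inj_on (\<lambda>v. {v, f v}) D"
    by (rule inj_onI) (use distinct_edges in blast)
  moreover have "connected_matching E ?M"
    unfolding connected_matching_def matching_def is_edge_def
  proof (intro conjI ballI impI)
    show "\<exists>u v. e = {u, v} \<and> E u v" if "e \<in> ?M" for e
      using that assms(4) by blast
    fix e e'
    assume "e \<in> ?M" "e' \<in> ?M" "e \<noteq> e'"
    then obtain v w where "v \<in> D" "w \<in> D" "v \<noteq> w" "e = {v, f v}" "e' = {w, f w}"
      by blast
    then show "e \<inter> e' = {}" "\<exists>x\<in>e. \<exists>y\<in>e'. E x y"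
      using distinct_edges assms(5) by simp_all
  qed
  ultimately show ?thesis
    using card_le_cm[OF assms(1)] card_image by fastforce
qed

lemma independent_set_card_le:
  assumes "simple_graph V E" "independent_set V E I"
  shows "card I \<le> independence_number V E"
proof -
  have "{I. independent_set V E I} \<subseteq> Pow V"
    by (auto simp: independent_set_def)
  then have "finite {I. independent_set V E I}"
    using assms(1) finite_subset by (fastforce simp: simple_graph_def)
  then show ?thesis
    unfolding independence_number_def using assms(2) by (intro Max_ge) auto
qed

lemma no_independent_triple:
  assumes "simple_graph V E" "independence_number V E \<le> 2"
    and "{a, b, c} \<subseteq> V" "distinct [a, b, c]"
  shows "E a b \<or> E a c \<or> E b c"
proof (rule ccontr)
  assume "\<not> (E a b \<or> E a c \<or> E b c)"
  moreover have "\<not> E v v" "E u v \<Longrightarrow> E v u" for u v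
    using assms(1) by (auto simp: simple_graph_def)
  ultimately have "independent_set V E {a, b, c}"
    using assms(3) unfolding independent_set_def by auto
  then have "card {a, b, c} \<le> 2"
    using independent_set_card_le[OF assms(1)] assms(2) le_trans by blast
  then show False
    using assms(4) by simp
qed

lemma clique_subset: "clique V E A \<Longrightarrow> B \<subseteq> A \<Longrightarrow> clique V E B"
  unfolding clique_def by blast

lemma clique_Un:
  assumes "simple_graph V E" "clique V E A" "clique V E B" "complete_to E A B"
  shows "clique V E (A \<union> B)"
proof -
  have "E u v" if "u \<in> B" "v \<in> A" for u v
    using assms(1,4) that unfolding complete_to_def simple_graph_def by blast
  then show ?thesis
    using assms(2-4) unfolding clique_def complete_to_def by auto
qed

definition non_neighbours :: "'a set \<Rightarrow> ('a \<Rightarrow> 'a \<Rightarrow> bool) \<Rightarrow> 'a \<Rightarrow> 'a set" where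
  "non_neighbours V E v = {u \<in> V. u \<noteq> v \<and> \<not> E v u}"

lemma clique_non_neighbours:
  assumes "simple_graph V E" "independence_number V E \<le> 2" "v \<in> V"
  shows "clique V E (non_neighbours V E v)"
  unfolding clique_def non_neighbours_def
  using no_independent_triple[OF assms(1,2), of v] assms(3) by auto

lemma card_neighbours_outside:
  assumes "finite V" "v \<in> P"
  shows "card (V - P) - card (non_neighbours V E v) \<le> card {u \<in> V - P. E v u}"
proof -
  have "card (V - P) - card (non_neighbours V E v) \<le> card (V - P - non_neighbours V E v)"
    by (rule diff_card_le_card_Diff) (use assms(1) in \<open>simp add: non_neighbours_def\<close>)
  also have "\<dots> \<le> card {u \<in> V - P. E v u}"
    using assms by (intro card_mono) (auto simp: non_neighbours_def)
  finally show ?thesis .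
qed

lemma clique_outside_neighbours_cm_ge:
  assumes "simple_graph V E" "clique V E P" "t \<le> card P" "card P \<le> 2 * t"
    and "\<forall>p\<in>P. 2 * t - card P \<le> card {u \<in> V - P. E p u}"
  shows "t \<le> cm V E"
proof -
  have "finite P"
    using assms(1,2) finite_subset unfolding clique_def simple_graph_def by auto
  obtain D where D: "D \<subseteq> P" "card D = t"
    using obtain_subset_with_card_n[OF assms(3)] by metis
  have "2 * t - card P \<le> card D"
    using D(2) assms(3) by simp
  then obtain K where K: "K \<subseteq> D" "card K = 2 * t - card P"
    using obtain_subset_with_card_n by metis
  have "finite D"
    using finite_subset[OF D(1) \<open>finite P\<close>] .
  then have "finite K" "finite (D - K)"
    using finite_subset[OF K(1)] by simp_all
  have "\<forall>v\<in>K. card K \<le> card {u \<in> V - P. E v u}"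
    using K D(1) assms(5) by auto
  then obtain f where f: "inj_on f K" "\<forall>v\<in>K. f v \<in> {u \<in> V - P. E v u}"
    by (rule obtain_inj_choice[OF \<open>finite K\<close>])
  have "P - D - f ` K = P - D"
    using f(2) by auto
  moreover have "card (D - K) = card (P - D)"
    using card_Diff_subset[OF \<open>finite K\<close> K(1)] card_Diff_subset[OF \<open>finite D\<close> D(1)] K(2) D(2) assms(3,4)
    by linarith
  ultimately have "\<exists>g. inj_on g (K \<union> (D - K)) \<and> (\<forall>v\<in>K. g v = f v) \<and> (\<forall>v\<in>D - K. g v \<in> P - D)"
    using f(1) by (intro extend_inj_choice[OF \<open>finite (D - K)\<close>]) auto
  moreover have "K \<union> (D - K) = D"
    using K(1) by blast
  ultimately obtain g where g: "inj_on g D" "\<forall>v\<in>K. g v = f v" "\<forall>v\<in>D - K. g v \<in> P - D"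
    by auto
  have E_P: "E u v" if "u \<in> P" "v \<in> P" "u \<noteq> v" for u v
    using assms(2) that unfolding clique_def by blast
  have "card D \<le> cm V E"
  proof (rule partner_map_card_le_cm[OF assms(1) g(1)])
    have "g v \<notin> D \<and> E v (g v)" if "v \<in> D" for v
    proof (cases "v \<in> K")
      case True
      then show ?thesis
        using f(2) g(2) D(1) by auto
    next
      case False
      then have "g v \<in> P - D"
        using that g(3) by blast
      moreover have "v \<in> P" "v \<noteq> g v"
        using \<open>g v \<in> P - D\<close> that D(1) by auto
      ultimately show ?thesis
        using E_P[of v "g v"] by simp
    qed
    then show "g ` D \<inter> D = {}" "\<forall>v\<in>D. E v (g v)"
      by auto
    show "\<forall>v\<in>D. \<forall>w\<in>D. v \<noteq> w \<longrightarrow> (\<exists>x\<in>{v, g v}. \<exists>y\<in>{w, g w}. E x y)"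
      using D(1) E_P by (meson insertI1 subsetD)
  qed
  then show ?thesis
    using D(2) by simp
qed

locale alpha2_low_cm_graph =
  fixes V :: "'a set" and E :: "'a \<Rightarrow> 'a \<Rightarrow> bool" and t :: nat
  assumes simple: "simple_graph V E"
    and card_V: "card V = 4 * t - 1"
    and alpha_le_2: "independence_number V E \<le> 2"
    and cm_less: "cm V E < t"
begin

lemma finite_V: "finite V"
  using simple by (simp add: simple_graph_def)

lemma E_sym: "E u v \<Longrightarrow> E v u"
  using simple by (simp add: simple_graph_def)

lemma clique_card_less_double:
  assumes "clique V E P"
  shows "card P < 2 * t"
proof (rule ccontr)
  assume "\<not> card P < 2 * t"
  then obtain Q where "Q \<subseteq> P" "card Q = 2 * t"
    using obtain_subset_with_card_n by (metis not_less)
  then have "t \<le> cm V E"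
    using clique_outside_neighbours_cm_ge[OF simple clique_subset[OF assms]] by simp
  then show False
    using cm_less by simp
qed

lemma clique_card_less:
  assumes "clique V E P"
  shows "card P < t"
proof (rule ccontr)
  assume "\<not> card P < t"
  have "P \<subseteq> V"
    using assms by (simp add: clique_def)
  then have card_V_Diff: "card (V - P) = 4 * t - 1 - card P"
    using card_Diff_subset[OF finite_subset[OF _ finite_V]] card_V by simp
  have "2 * t - card P \<le> card {u \<in> V - P. E p u}" if "p \<in> P" for p
  proof -
    have "card (non_neighbours V E p) < 2 * t"
      using clique_card_less_double[OF clique_non_neighbours[OF simple alpha_le_2]] that \<open>P \<subseteq> V\<close>
      by blast
    then show ?thesis
      using card_neighbours_outside[OF finite_V that, of E] card_V_Diff clique_card_less_double[OF assms]
      by linarith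
  qed
  then have "t \<le> cm V E"
    using clique_outside_neighbours_cm_ge[OF simple assms] \<open>\<not> card P < t\<close> clique_card_less_double[OF assms]
    by simp
  then show False
    using cm_less by simp
qed

lemma card_non_neighbours_less:
  assumes "v \<in> V"
  shows "card (non_neighbours V E v) < t"
  using clique_card_less[OF clique_non_neighbours[OF simple alpha_le_2 assms]] .

lemma card_V_Diff_t_set:
  assumes "D \<subseteq> V" "card D = t"
  shows "card (V - D) = 3 * t - 1"
  using card_Diff_subset[OF finite_subset[OF assms(1) finite_V] assms(1)] assms(2) card_V by simp

lemma card_outside_neighbours_ge:
  assumes "D \<subseteq> V" "card D = t" "v \<in> D"
  shows "2 * t \<le> card {u \<in> V - D. E v u}"
proof -
  have "card (V - D) = 3 * t - 1"
    using card_V_Diff_t_set[OF assms(1,2)] .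
  then show ?thesis
    using card_neighbours_outside[OF finite_V assms(3), of E] card_non_neighbours_less[of v] assms
    by fastforce
qed

lemma common_neighbours_small:
  assumes "D \<subseteq> V" "card D = t" "D = D0 \<union> Da \<union> Db"
    and "clique V E (D0 \<union> Da)" "clique V E (D0 \<union> Db)"
  shows "\<exists>y\<in>Db. card {v \<in> V - D. E y v \<and> (\<forall>x\<in>Da. E x v)} < card Db"
proof (rule ccontr)
  assume "\<not> ?thesis"
  then have large: "\<forall>y\<in>Db. card Db \<le> card {v \<in> V - D. E y v \<and> (\<forall>x\<in>Da. E x v)}"
    by (simp add: not_less)
  have "finite D"
    using assms(1) finite_V finite_subset by blast
  then have "finite Db" "finite (D - Db)"
    using assms(3) by simp_all
  obtain f where f: "inj_on f Db" "\<forall>y\<in>Db. f y \<in> {v \<in> V - D. E y v \<and> (\<forall>x\<in>Da. E x v)}"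
    using obtain_inj_choice[OF \<open>finite Db\<close> large] by blast
  have "card (D - Db) \<le> card ({u \<in> V - D. E v u} - f ` Db)" if "v \<in> D - Db" for v
  proof -
    have "card {u \<in> V - D. E v u} - card (f ` Db) \<le> card ({u \<in> V - D. E v u} - f ` Db)"
      by (rule diff_card_le_card_Diff) (use \<open>finite Db\<close> in simp)
    moreover have "card (f ` Db) \<le> card Db"
      using card_image_le[OF \<open>finite Db\<close>] .
    moreover have "card (D - Db) = t - card Db"
      using assms(2,3) \<open>finite D\<close> by (simp add: card_Diff_subset)
    moreover have "2 * t \<le> card {u \<in> V - D. E v u}"
      using card_outside_neighbours_ge[OF assms(1,2)] that by blast
    ultimately show ?thesis
      by linarith
  qed
  then have "\<exists>g. inj_on g (Db \<union> (D - Db)) \<and> (\<forall>y\<in>Db. g y = f y) \<and>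
      (\<forall>v\<in>D - Db. g v \<in> {u \<in> V - D. E v u} - f ` Db)"
    using f(1) by (intro extend_inj_choice[OF \<open>finite (D - Db)\<close>]) auto
  moreover have "Db \<union> (D - Db) = D"
    using assms(3) by blast
  ultimately obtain g where g: "inj_on g D" "\<forall>y\<in>Db. g y = f y"
      "\<forall>v\<in>D - Db. g v \<in> {u \<in> V - D. E v u} - f ` Db"
    by auto
  have "card D \<le> cm V E"
  proof (rule partner_map_card_le_cm[OF simple])
    show "inj_on g D"
      by (fact g(1))
    show "g ` D \<inter> D = {}" "\<forall>v\<in>D. E v (g v)"
      using f(2) g(2,3) by auto
    show "\<forall>v\<in>D. \<forall>w\<in>D. v \<noteq> w \<longrightarrow> (\<exists>x\<in>{v, g v}. \<exists>y\<in>{w, g w}. E x y)"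
    proof (intro ballI impI)
      fix v w
      assume "v \<in> D" "w \<in> D" "v \<noteq> w"
      then consider "{v, w} \<subseteq> D0 \<union> Da" | "{v, w} \<subseteq> D0 \<union> Db" | "v \<in> Da" "w \<in> Db" | "v \<in> Db" "w \<in> Da"
        using assms(3) by blast
      then show "\<exists>x\<in>{v, g v}. \<exists>y\<in>{w, g w}. E x y"
        by cases (use assms(4,5) \<open>v \<noteq> w\<close> f(2) g(2) E_sym in \<open>auto simp: clique_def\<close>)
    qed
  qed
  then show False
    using assms(2) cm_less by simp
qed

lemma card_V_Diff_le:
  assumes "D \<subseteq> V" "y \<in> D"
  shows "card (V - D) \<le>
    card {v \<in> V - D. E y v \<and> (\<forall>x\<in>X. E x v)} + card {v \<in> V - D. \<exists>x\<in>X. \<not> E x v} + (t - 1)"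
proof -
  let ?common = "{v \<in> V - D. E y v \<and> (\<forall>x\<in>X. E x v)}" and ?missing = "{v \<in> V - D. \<exists>x\<in>X. \<not> E x v}"
  have "V - D \<subseteq> ?common \<union> ?missing \<union> non_neighbours V E y"
    using assms(2) unfolding non_neighbours_def by auto
  then have "card (V - D) \<le> card (?common \<union> ?missing \<union> non_neighbours V E y)"
    using finite_V by (intro card_mono) (auto simp: non_neighbours_def)
  also have "\<dots> \<le> card ?common + card ?missing + card (non_neighbours V E y)"
    by (meson card_Un_le add_right_mono le_trans)
  finally show ?thesis
    using card_non_neighbours_less[of y] assms by fastforce
qed

lemma outside_non_neighbours_disjoint:
  assumes "D \<subseteq> V" "D1 \<subseteq> D" "D2 \<subseteq> D" "D1 \<inter> D2 = {}" "anticomplete_to E D1 D2"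
  shows "{v \<in> V - D. \<exists>x\<in>D1. \<not> E x v} \<inter> {v \<in> V - D. \<exists>y\<in>D2. \<not> E y v} = {}"
proof (rule ccontr)
  assume "\<not> ?thesis"
  then obtain v x y where "v \<in> V - D" "x \<in> D1" "y \<in> D2" "\<not> E x v" "\<not> E y v"
    by blast
  moreover have "\<not> E x y"
    using assms(5) \<open>x \<in> D1\<close> \<open>y \<in> D2\<close> unfolding anticomplete_to_def by blast
  moreover have "{x, y, v} \<subseteq> V" "distinct [x, y, v]"
    using \<open>v \<in> V - D\<close> \<open>x \<in> D1\<close> \<open>y \<in> D2\<close> assms(1-4) by auto
  ultimately show False
    using no_independent_triple[OF simple alpha_le_2] by blast
qed

lemma common_neighbours_large_on_one_side:
  assumes "D \<subseteq> V" "card D = t" "D1 \<subseteq> D" "D2 \<subseteq> D" "D1 \<inter> D2 = {}"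
    and "anticomplete_to E D1 D2"
  shows "(\<forall>y\<in>D2. card D2 \<le> card {v \<in> V - D. E y v \<and> (\<forall>x\<in>D1. E x v)}) \<or>
    (\<forall>x\<in>D1. card D1 \<le> card {v \<in> V - D. E x v \<and> (\<forall>y\<in>D2. E y v)})"
proof (rule ccontr)
  let ?missing = "\<lambda>X. {v \<in> V - D. \<exists>x\<in>X. \<not> E x v}"
  have "finite (?missing X)" "?missing X \<subseteq> V - D" for X
    using finite_V by auto
  then have "card (?missing D1) + card (?missing D2) = card (?missing D1 \<union> ?missing D2)"
    using outside_non_neighbours_disjoint[OF assms(1,3-6)] by (simp add: card_Un_disjoint)
  also have "\<dots> \<le> card (V - D)"
    using finite_V by (intro card_mono) auto
  finally have missing: "card (?missing D1) + card (?missing D2) \<le> card (V - D)" .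
  have "finite D"
    using assms(1) finite_V finite_subset by blast
  then have "card D1 + card D2 = card (D1 \<union> D2)"
    using assms(3-5) by (simp add: card_Un_disjoint finite_subset)
  also have "\<dots> \<le> t"
    using assms(2-4) \<open>finite D\<close> by (metis Un_subset_iff card_mono)
  finally have "card D1 + card D2 \<le> t" .
  assume "\<not> ?thesis"
  then obtain x y where "x \<in> D1" "y \<in> D2"
    "card {v \<in> V - D. E y v \<and> (\<forall>x\<in>D1. E x v)} < card D2"
    "card {v \<in> V - D. E x v \<and> (\<forall>y\<in>D2. E y v)} < card D1"
    by (auto simp: not_le)
  moreover have "x \<in> D" "y \<in> D" "1 \<le> t"
    using \<open>x \<in> D1\<close> \<open>y \<in> D2\<close> assms(3,4) cm_less by auto
  \<comment> \<open>Adding the two bounds: \<open>2(3t - 1) \<le> (|D\<^sub>1| - 1) + (|D\<^sub>2| - 1) + (3t - 1) + 2(t - 1) \<le> 6t - 5\<close>.\<close>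
  ultimately show False
    using card_V_Diff_le[OF assms(1), of y D1] card_V_Diff_le[OF assms(1), of x D2]
      card_V_Diff_t_set[OF assms(1,2)] missing \<open>card D1 + card D2 \<le> t\<close>
    by linarith
qed

lemma no_t_set_of_two_cliques:
  assumes "D \<subseteq> V" "card D = t" "D = D0 \<union> D1 \<union> D2" "D1 \<inter> D2 = {}"
    and "clique V E (D0 \<union> D1)" "clique V E (D0 \<union> D2)" "anticomplete_to E D1 D2"
  shows False
proof -
  have "D1 \<subseteq> D" "D2 \<subseteq> D" "D = D0 \<union> D2 \<union> D1"
    using assms(3) by blast+
  then show False
    using common_neighbours_large_on_one_side[OF assms(1,2) _ _ assms(4,7)]
      common_neighbours_small[OF assms(1-3,5,6)] common_neighbours_small[OF assms(1,2) _ assms(6,5)]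
    by (meson not_le)
qed

end

theorem theorem1p5:
  fixes V :: "'a set" and E :: "'a \<Rightarrow> 'a \<Rightarrow> bool" and t :: nat
    and S0 S1 S2 :: "'a set"
  assumes "simple_graph V E"
    and "t \<ge> 1"
    and "card V = 4 * t - 1"
    and "independence_number V E = 2"
    and "cm V E \<le> t - 1"
    and "S0 \<subseteq> V" and "S1 \<subseteq> V" and "S2 \<subseteq> V"
    and "S0 \<inter> S1 = {}" and "S0 \<inter> S2 = {}" and "S1 \<inter> S2 = {}"
    and "clique V E S0" and "clique V E S1" and "clique V E S2"
    and "complete_to E S0 (S1 \<union> S2)"
    and "anticomplete_to E S1 S2"
  shows "card S0 + card S1 + card S2 \<le> t - 1"
proof (rule ccontr)
  assume "\<not> card S0 + card S1 + card S2 \<le> t - 1"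
  interpret alpha2_low_cm_graph V E t
    using assms(1-5) by unfold_locales auto
  have "finite S0" "finite S1" "finite S2"
    using assms(6-8) finite_V finite_subset by blast+
  then have "card (S0 \<union> S1 \<union> S2) = card S0 + card S1 + card S2"
    using assms(9-11) by (simp add: card_Un_disjoint Int_Un_distrib2)
  then have "t \<le> card (S0 \<union> S1 \<union> S2)"
    using \<open>\<not> _ \<le> t - 1\<close> by linarith
  then obtain D where D: "D \<subseteq> S0 \<union> S1 \<union> S2" "card D = t"
    by (meson obtain_subset_with_card_n)
  define D0 D1 D2 where "D0 = D \<inter> S0" and "D1 = D \<inter> S1" and "D2 = D \<inter> S2"
  have "D \<subseteq> V" "D = D0 \<union> D1 \<union> D2" "D1 \<inter> D2 = {}"
    using D(1) assms(6-8,11) unfolding D0_def D1_def D2_def by auto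
  moreover have "clique V E (D0 \<union> D1)" "clique V E (D0 \<union> D2)"
    using clique_Un[OF simple assms(12)] assms(13-15) unfolding D0_def D1_def D2_def complete_to_def
    by (meson Int_lower2 Un_iff Un_mono clique_subset)+
  moreover have "anticomplete_to E D1 D2"
    using assms(16) unfolding D1_def D2_def anticomplete_to_def by blast
  ultimately show False
    using no_t_set_of_two_cliques D(2) by blast
qed

end
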